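(* Let $(W,S)$ be a finite Coxeter system and $K\subseteq S$. Suppose $w\in{}^K W$ is such that ${}^{S\setminus\{s\}}w=e$ for all $s\in S\setminus K$. Then $w=e$.
   Context: For $J\subseteq S$, $W_J$ is the parabolic subgroup generated by $J$, ${}^J w$ denotes the unique minimal-length element of the coset $W_Jw$, and ${}^J W=\{{}^J w:w\in W\}$. $e$ is the identity. *)

theory Defs
  imports "HOL-Algebra.Algebra"
begin

definition word_prod :: "('a, 'b) monoid_scheme \<Rightarrow> 'a list \<Rightarrow> 'a" where
  "word_prod G xs = foldr (\<lambda>x y. x \<otimes>\<^bsub>G\<^esub> y) xs \<one>\<^bsub>G\<^esub>"

text \<open>Coxeter system (W,S), defined by the Coxeter presentation:
  S is a generating set of involutions of the group W, and W has the universal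
  property of the group presented by generators S and relations (s t)^m(s,t) = 1,
  where m(s,t) is the order of s t.  The universal property is required for
  target groups whose carrier lives in the type 'a list; this suffices, since
  any subgroup generated by the image of S has cardinality at most that of the
  set of words over S.\<close>
definition coxeter_system :: "('a, 'b) monoid_scheme \<Rightarrow> 'a set \<Rightarrow> bool" where
  "coxeter_system W S \<longleftrightarrow>
     group W \<and> S \<subseteq> carrier W \<and> \<one>\<^bsub>W\<^esub> \<notin> S \<and>
     (\<forall>s\<in>S. s \<otimes>\<^bsub>W\<^esub> s = \<one>\<^bsub>W\<^esub>) \<and>
     generate W S = carrier W \<and>
     (\<forall>(H :: 'a list monoid) f. group H \<and> f \<in> S \<rightarrow> carrier H \<and>
        (\<forall>s\<in>S. \<forall>t\<in>S. \<forall>n::nat.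
            (s \<otimes>\<^bsub>W\<^esub> t) [^]\<^bsub>W\<^esub> n = \<one>\<^bsub>W\<^esub> \<longrightarrow>
            (f s \<otimes>\<^bsub>H\<^esub> f t) [^]\<^bsub>H\<^esub> n = \<one>\<^bsub>H\<^esub>)
      \<longrightarrow> (\<exists>h\<in>hom W H. \<forall>s\<in>S. h s = f s))"

definition cox_length :: "('a, 'b) monoid_scheme \<Rightarrow> 'a set \<Rightarrow> 'a \<Rightarrow> nat" where
  "cox_length W S w = (LEAST n. \<exists>xs. set xs \<subseteq> S \<and> length xs = n \<and> word_prod W xs = w)"

definition parabolic :: "('a, 'b) monoid_scheme \<Rightarrow> 'a set \<Rightarrow> 'a set" where
  "parabolic W J = generate W J"

definition min_rep :: "('a, 'b) monoid_scheme \<Rightarrow> 'a set \<Rightarrow> 'a set \<Rightarrow> 'a \<Rightarrow> 'a" where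
  "min_rep W S J w = (THE u. u \<in> parabolic W J #>\<^bsub>W\<^esub> w \<and>
      (\<forall>v \<in> parabolic W J #>\<^bsub>W\<^esub> w. v \<noteq> u \<longrightarrow> cox_length W S u < cox_length W S v))"

definition min_reps :: "('a, 'b) monoid_scheme \<Rightarrow> 'a set \<Rightarrow> 'a set \<Rightarrow> 'a set" where
  "min_reps W S J = {min_rep W S J w | w. w \<in> carrier W}"

end

theory Submission
  imports Defs
begin

text \<open>
  If \<open>w \<noteq> 1\<close>, let \<open>s\<close> be the first letter of a reduced word of \<open>w\<close>, so that
  \<open>s w\<close> is shorter than \<open>w\<close>. For \<open>s \<in> K\<close> this contradicts the minimality of \<open>w\<close> in
  \<open>W\<^sub>K w\<close>. Otherwise the hypothesis puts \<open>w\<close> into \<open>W\<^sub>J\<close> for \<open>J = S - {s}\<close>; the exchange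
  condition applied to a reduced word of \<open>w\<close> over \<open>J\<close> gives \<open>s = (s w) w\<^sup>-\<^sup>1 \<in> W\<^sub>J\<close>, and a
  reduced subword of an expression of \<open>s\<close> over \<open>J\<close> then forces \<open>s \<in> J\<close>.

  The exchange condition, and with it the existence and uniqueness of the shortest coset
  representatives that define \<open>min_rep\<close>, comes from Tits' permutation representation of \<open>W\<close>,
  whose existence is where the Coxeter presentation is used.
\<close>

section \<open>Words in monoids and groups\<close>

lemma word_prod_Nil [simp]: "word_prod G [] = \<one>\<^bsub>G\<^esub>"
  by (simp add: word_prod_def)

lemma word_prod_Cons [simp]: "word_prod G (x # xs) = x \<otimes>\<^bsub>G\<^esub> word_prod G xs"
  by (simp add: word_prod_def)

lemma (in monoid) word_prod_closed [simp]:
  "set xs \<subseteq> carrier G \<Longrightarrow> word_prod G xs \<in> carrier G"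
  by (induction xs) auto

lemma (in monoid) word_prod_append:
  "set xs \<subseteq> carrier G \<Longrightarrow> set ys \<subseteq> carrier G \<Longrightarrow>
    word_prod G (xs @ ys) = word_prod G xs \<otimes> word_prod G ys"
  by (induction xs) (auto simp: m_assoc)

lemma (in monoid) word_prod_concat_replicate:
  "set xs \<subseteq> carrier G \<Longrightarrow> word_prod G (concat (replicate n xs)) = word_prod G xs [^] n"
proof (induction n)
  case (Suc n)
  have "concat (replicate (Suc n) xs) = concat (replicate n xs) @ xs"
    by (simp flip: replicate_append_same)
  moreover have "set (concat (replicate n xs)) \<subseteq> carrier G"
    using Suc.prems by (cases n) auto
  ultimately show ?case
    using Suc by (simp add: word_prod_append)
qed simp

lemma (in group) word_prod_rev:
  assumes "set xs \<subseteq> carrier G" and "\<And>x. x \<in> set xs \<Longrightarrow> x \<otimes> x = \<one>"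
  shows "word_prod G (rev xs) = inv (word_prod G xs)"
  using assms
proof (induction xs)
  case (Cons x xs)
  then have "inv x = x"
    by (simp add: inv_equality)
  with Cons show ?case
    by (simp add: word_prod_append inv_mult_group)
qed simp

lemma (in group_hom) hom_word_prod:
  "set xs \<subseteq> carrier G \<Longrightarrow> h (word_prod G xs) = word_prod H (map h xs)"
  by (induction xs) auto

lemma set_take_drop_Suc_subset: "set (take i xs @ drop (Suc i) xs) \<subseteq> set xs"
  by (auto dest: in_set_takeD in_set_dropD)

lemma (in group) generate_involutions:
  assumes "A \<subseteq> carrier G" and "\<And>a. a \<in> A \<Longrightarrow> a \<otimes> a = \<one>"
  shows "generate G A = {word_prod G xs | xs. set xs \<subseteq> A}"
proof
  show "generate G A \<subseteq> {word_prod G xs | xs. set xs \<subseteq> A}"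
  proof
    fix x assume "x \<in> generate G A"
    then show "x \<in> {word_prod G xs | xs. set xs \<subseteq> A}"
    proof (induction rule: generate.induct)
      case one
      show ?case by (auto intro: exI[of _ "[]"])
    next
      case (incl a)
      show ?case using incl assms by (auto intro!: exI[of _ "[a]"])
    next
      case (inv a)
      then have "inv a = a"
        using assms by (auto simp: inv_equality)
      then show ?case using inv assms by (auto intro!: exI[of _ "[a]"])
    next
      case (eng x y)
      then obtain xs ys where "set xs \<subseteq> A" "x = word_prod G xs" "set ys \<subseteq> A" "y = word_prod G ys"
        by auto
      then show ?case
        using assms by (auto intro!: exI[of _ "xs @ ys"] simp: word_prod_append)
    qed
  qed
  show "{word_prod G xs | xs. set xs \<subseteq> A} \<subseteq> generate G A"
  proof clarify
    fix xs assume "set xs \<subseteq> A"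
    then show "word_prod G xs \<in> generate G A"
      by (induction xs) (auto intro: generate.intros)
  qed
qed

lemma (in group) generate_image_involutions:
  assumes f: "f \<in> A \<rightarrow> carrier G" and "\<And>a. a \<in> A \<Longrightarrow> f a \<otimes> f a = \<one>"
  shows "generate G (f ` A) = (\<lambda>xs. word_prod G (map f xs)) ` {xs. set xs \<subseteq> A}"
proof -
  have "generate G (f ` A) = {word_prod G ys | ys. set ys \<subseteq> f ` A}"
    using assms by (intro generate_involutions) auto
  also have "\<dots> = (\<lambda>xs. word_prod G (map f xs)) ` {xs. set xs \<subseteq> A}"
  proof -
    have "set ys \<subseteq> f ` A \<longleftrightarrow> (\<exists>xs. set xs \<subseteq> A \<and> ys = map f xs)" for ys
    proof -
      have "set ys \<subseteq> f ` A \<longleftrightarrow> ys \<in> lists (f ` A)"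
        by auto
      then show ?thesis
        by (auto simp: lists_image)
    qed
    then show ?thesis
      by auto
  qed
  finally show ?thesis .
qed

lemma sum_lessThan_twice_period:
  fixes f :: "nat \<Rightarrow> 'b::comm_monoid_add"
  assumes "\<And>i. f (i + n) = f i"
  shows "(\<Sum>i<2 * n. f i) = (\<Sum>i<n. f i) + (\<Sum>i<n. f i)"
proof -
  have "(\<Sum>i<2 * n. f i) = (\<Sum>i<n. f i) + sum f {0 + n..<n + n}"
    by (simp add: mult_2 atLeast0LessThan[symmetric] sum.atLeastLessThan_concat)
  also have "sum f {0 + n..<n + n} = (\<Sum>i<n. f (i + n))"
    by (simp only: sum.shift_bounds_nat_ivl atLeast0LessThan)
  finally show ?thesis
    by (simp add: assms)
qed

text \<open>The universal property in \<^const>\<open>coxeter_system\<close> is only available for groups on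
  \<^typ>\<open>'a list\<close>; other target groups are moved there along an injection.\<close>

definition transport :: "('a, 'm) monoid_scheme \<Rightarrow> ('a \<Rightarrow> 'c) \<Rightarrow> 'c monoid" where
  "transport G h = \<lparr>carrier = h ` carrier G,
     monoid.mult = (\<lambda>x y. h (inv_into (carrier G) h x \<otimes>\<^bsub>G\<^esub> inv_into (carrier G) h y)),
     one = h \<one>\<^bsub>G\<^esub>\<rparr>"

lemma
  assumes "group G" and "inj_on h (carrier G)"
  shows group_transport: "group (transport G h)"
    and iso_transport: "h \<in> iso G (transport G h)"
proof -
  interpret group G by fact
  have inv_h [simp]: "inv_into (carrier G) h (h x) = x" if "x \<in> carrier G" for x
    using assms(2) that by simp
  show "group (transport G h)"
  proof (rule groupI)
    show "\<exists>y\<in>carrier (transport G h). y \<otimes>\<^bsub>transport G h\<^esub> x = \<one>\<^bsub>transport G h\<^esub>"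
      if "x \<in> carrier (transport G h)" for x
    proof -
      from that obtain a where "a \<in> carrier G" "x = h a"
        by (auto simp: transport_def)
      then show ?thesis
        by (intro bexI[of _ "h (inv\<^bsub>G\<^esub> a)"]) (auto simp: transport_def)
    qed
  qed (auto simp: transport_def m_assoc)
  show "h \<in> iso G (transport G h)"
    using assms(2) by (auto simp: iso_def hom_def bij_betw_def transport_def)
qed

locale coxeter = group W for W :: "('a, 'b) monoid_scheme" (structure) +
  fixes S :: "'a set"
  assumes coxeter_system: "coxeter_system W S"
begin

lemma gens_closed: "S \<subseteq> carrier W"
  using coxeter_system by (simp add: coxeter_system_def)

lemma gen_closed [simp]: "s \<in> S \<Longrightarrow> s \<in> carrier W"
  using gens_closed by auto

lemma one_not_gen: "\<one> \<notin> S"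
  using coxeter_system by (simp add: coxeter_system_def)

lemma gen_involution [simp]: "s \<in> S \<Longrightarrow> s \<otimes> s = \<one>"
  using coxeter_system by (simp add: coxeter_system_def)

lemma inv_gen [simp]: "s \<in> S \<Longrightarrow> inv s = s"
  by (simp add: inv_equality)

lemma gen_gen_mult [simp]: "s \<in> S \<Longrightarrow> x \<in> carrier W \<Longrightarrow> s \<otimes> (s \<otimes> x) = x"
  by (simp flip: m_assoc)

lemma conj_gen_conj_gen [simp]: "s \<in> S \<Longrightarrow> x \<in> carrier W \<Longrightarrow> s \<otimes> (s \<otimes> x \<otimes> s) \<otimes> s = x"
  by (simp add: m_assoc)

lemma gen_mult_eq_one_iff [simp]: "s \<in> S \<Longrightarrow> x \<in> carrier W \<Longrightarrow> s \<otimes> x = \<one> \<longleftrightarrow> x = s"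
  by (metis gen_gen_mult gen_closed gen_involution r_one)

lemma conj_gen_eq_iff:
  "s \<in> S \<Longrightarrow> x \<in> carrier W \<Longrightarrow> y \<in> carrier W \<Longrightarrow> s \<otimes> x \<otimes> s = y \<longleftrightarrow> x = s \<otimes> y \<otimes> s"
  by (metis conj_gen_conj_gen)

lemma universal_property_lists:
  fixes H :: "'a list monoid"
  assumes "group H" and "f \<in> S \<rightarrow> carrier H"
    and "\<And>s t n. s \<in> S \<Longrightarrow> t \<in> S \<Longrightarrow> (s \<otimes> t) [^] (n::nat) = \<one> \<Longrightarrow>
                 (f s \<otimes>\<^bsub>H\<^esub> f t) [^]\<^bsub>H\<^esub> n = \<one>\<^bsub>H\<^esub>"
  shows "\<exists>h\<in>hom W H. \<forall>s\<in>S. h s = f s"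
proof -
  have "\<forall>(H :: 'a list monoid) f. group H \<and> f \<in> S \<rightarrow> carrier H \<and>
        (\<forall>s\<in>S. \<forall>t\<in>S. \<forall>n::nat. (s \<otimes> t) [^] n = \<one> \<longrightarrow>
            (f s \<otimes>\<^bsub>H\<^esub> f t) [^]\<^bsub>H\<^esub> n = \<one>\<^bsub>H\<^esub>)
      \<longrightarrow> (\<exists>h\<in>hom W H. \<forall>s\<in>S. h s = f s)"
    using coxeter_system unfolding coxeter_system_def by (elim conjE)
  then show ?thesis
    using assms by blast
qed

lemma universal_property_iso:
  fixes H :: "('c, 'd) monoid_scheme" and H' :: "'a list monoid"
  assumes H: "group H" and H': "group H'" and \<phi>: "\<phi> \<in> iso H H'"
    and f: "f \<in> S \<rightarrow> carrier H"
    and rel: "\<And>s t n. s \<in> S \<Longrightarrow> t \<in> S \<Longrightarrow> (s \<otimes> t) [^] (n::nat) = \<one> \<Longrightarrow>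
                 (f s \<otimes>\<^bsub>H\<^esub> f t) [^]\<^bsub>H\<^esub> n = \<one>\<^bsub>H\<^esub>"
  shows "\<exists>h\<in>hom W H. \<forall>s\<in>S. h s = f s"
proof -
  have \<phi>_hom: "group_hom H H' \<phi>"
    using H H' \<phi> by (simp add: group_hom_def group_hom_axioms_def iso_def)
  have "(\<lambda>s. \<phi> (f s)) \<in> S \<rightarrow> carrier H'"
    using f \<phi> by (auto simp: iso_def hom_def)
  moreover have "(\<phi> (f s) \<otimes>\<^bsub>H'\<^esub> \<phi> (f t)) [^]\<^bsub>H'\<^esub> n = \<one>\<^bsub>H'\<^esub>"
    if "s \<in> S" "t \<in> S" "(s \<otimes> t) [^] n = \<one>" for s t and n :: nat
  proof -
    have fs: "f s \<in> carrier H" and ft: "f t \<in> carrier H"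
      using f that(1,2) by auto
    have "(\<phi> (f s) \<otimes>\<^bsub>H'\<^esub> \<phi> (f t)) [^]\<^bsub>H'\<^esub> n = \<phi> ((f s \<otimes>\<^bsub>H\<^esub> f t) [^]\<^bsub>H\<^esub> n)"
      using group_hom.hom_mult[OF \<phi>_hom fs ft]
        group_hom.hom_nat_pow[OF \<phi>_hom monoid.m_closed[OF group.is_monoid[OF H] fs ft]] by simp
    then show ?thesis
      using rel[OF that] group_hom.hom_one[OF \<phi>_hom] by simp
  qed
  ultimately obtain \<psi> where \<psi>: "\<psi> \<in> hom W H'" "\<forall>s\<in>S. \<psi> s = \<phi> (f s)"
    using universal_property_lists[OF H'] by blast
  have "inv_into (carrier H) \<phi> \<in> hom H' H"
    using group.iso_set_sym[OF H \<phi>] by (simp add: iso_def)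
  then have "inv_into (carrier H) \<phi> \<circ> \<psi> \<in> hom W H"
    using \<psi>(1) by (rule Group.hom_compose[rotated])
  moreover have "(inv_into (carrier H) \<phi> \<circ> \<psi>) s = f s" if "s \<in> S" for s
  proof -
    have "f s \<in> carrier H"
      using f that by blast
    then show ?thesis
      using \<psi>(2) \<phi> that by (simp add: iso_def bij_betw_def)
  qed
  ultimately show ?thesis
    by blast
qed

lemma universal_property:
  fixes H :: "('c, 'd) monoid_scheme"
  assumes H: "group H" and f: "f \<in> S \<rightarrow> carrier H"
    and rel: "\<And>s t n. s \<in> S \<Longrightarrow> t \<in> S \<Longrightarrow> (s \<otimes> t) [^] (n::nat) = \<one> \<Longrightarrow>
                 (f s \<otimes>\<^bsub>H\<^esub> f t) [^]\<^bsub>H\<^esub> n = \<one>\<^bsub>H\<^esub>"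
  shows "\<exists>h\<in>hom W H. \<forall>s\<in>S. h s = f s"
proof -
  define G0 where "G0 = subgroup_generated H (f ` S)"
  define word where "word xs = word_prod H (map f xs)" for xs
  have "f s \<otimes>\<^bsub>H\<^esub> f s = \<one>\<^bsub>H\<^esub>" if "s \<in> S" for s
  proof -
    have "f s \<in> carrier H"
      using f that by blast
    then show ?thesis
      using rel[OF that that, of 1] that
        monoid.l_one[OF group.is_monoid[OF H] monoid.m_closed[OF group.is_monoid[OF H]]] by simp
  qed
  moreover have "f ` S \<subseteq> carrier H"
    using f by auto
  ultimately have "carrier G0 = word ` {xs. set xs \<subseteq> S}"
    using group.generate_image_involutions[OF H f]
    by (simp add: G0_def word_def carrier_subgroup_generated Int_absorb1)
  then have inj: "inj_on (inv_into {xs. set xs \<subseteq> S} word) (carrier G0)"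
    by (simp add: inj_on_inv_into)
  have G0: "group G0"
    by (simp add: G0_def group.group_subgroup_generated[OF H])
  have "f \<in> S \<rightarrow> carrier G0"
    using f by (auto simp: G0_def carrier_subgroup_generated intro: generate.incl)
  moreover have "(f s \<otimes>\<^bsub>G0\<^esub> f t) [^]\<^bsub>G0\<^esub> n = \<one>\<^bsub>G0\<^esub>"
    if "s \<in> S" "t \<in> S" "(s \<otimes> t) [^] n = \<one>" for s t and n :: nat
    using rel[OF that] by (simp add: G0_def pow_subgroup_generated)
  ultimately obtain h where "h \<in> hom W G0" and "\<forall>s\<in>S. h s = f s"
    using universal_property_iso[OF G0 group_transport[OF G0 inj] iso_transport[OF G0 inj]] by blast
  then show ?thesis
    unfolding G0_def hom_into_subgroup_eq_gen[OF H] by blast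
qed

abbreviation wprod :: "'a list \<Rightarrow> 'a" where
  "wprod \<equiv> word_prod W"

abbreviation len :: "'a \<Rightarrow> nat" where
  "len \<equiv> cox_length W S"

lemma wprod_closed [simp]: "set xs \<subseteq> S \<Longrightarrow> wprod xs \<in> carrier W"
  using gens_closed by (intro word_prod_closed) auto

lemma wprod_append: "set xs \<subseteq> S \<Longrightarrow> set ys \<subseteq> S \<Longrightarrow> wprod (xs @ ys) = wprod xs \<otimes> wprod ys"
  using gens_closed by (intro word_prod_append) auto

lemma wprod_rev: "set xs \<subseteq> S \<Longrightarrow> wprod (rev xs) = inv (wprod xs)"
  using gens_closed by (intro word_prod_rev) auto

lemma parabolic_eq: "J \<subseteq> S \<Longrightarrow> parabolic W J = {wprod xs | xs. set xs \<subseteq> J}"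
  unfolding parabolic_def using gens_closed by (intro generate_involutions) auto

lemma subgroup_parabolic: "J \<subseteq> S \<Longrightarrow> subgroup (parabolic W J) W"
  unfolding parabolic_def using gens_closed by (intro generate_is_subgroup) auto

lemma wprod_in_parabolic: "J \<subseteq> S \<Longrightarrow> set xs \<subseteq> J \<Longrightarrow> wprod xs \<in> parabolic W J"
  by (auto simp: parabolic_eq)

lemma carrier_eq_wprods: "carrier W = {wprod xs | xs. set xs \<subseteq> S}"
  using coxeter_system parabolic_eq[of S] by (simp add: coxeter_system_def parabolic_def)

lemma length_wprod_le: "set xs \<subseteq> S \<Longrightarrow> len (wprod xs) \<le> length xs"
  unfolding cox_length_def by (rule Least_le) auto

definition reduced :: "'a list \<Rightarrow> bool" where
  "reduced xs \<longleftrightarrow> set xs \<subseteq> S \<and> len (wprod xs) = length xs"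

lemma length_wprod_deletion_less:
  assumes "set xs \<subseteq> S" and "i < length xs"
  shows "len (wprod (take i xs @ drop (Suc i) xs)) < length xs"
proof -
  have "set (take i xs @ drop (Suc i) xs) \<subseteq> S"
    using assms(1) set_take_drop_Suc_subset[of i xs] by blast
  then have "len (wprod (take i xs @ drop (Suc i) xs)) \<le> length (take i xs @ drop (Suc i) xs)"
    by (rule length_wprod_le)
  then show ?thesis
    using assms(2) by simp
qed

lemma ex_reduced:
  assumes "w \<in> carrier W"
  shows "\<exists>xs. reduced xs \<and> wprod xs = w"
proof -
  have "\<exists>n xs. set xs \<subseteq> S \<and> length xs = n \<and> wprod xs = w"
    using assms carrier_eq_wprods by auto
  then have "\<exists>xs. set xs \<subseteq> S \<and> length xs = len w \<and> wprod xs = w"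
    unfolding cox_length_def by (rule LeastI_ex)
  then show ?thesis
    by (auto simp: reduced_def)
qed

lemma length_one [simp]: "len \<one> = 0"
  using length_wprod_le[of "[]"] by simp

lemma length_eq_0_iff: "w \<in> carrier W \<Longrightarrow> len w = 0 \<longleftrightarrow> w = \<one>"
  using ex_reduced[of w] by (auto simp: reduced_def)

lemma length_gen_mult_le:
  assumes "s \<in> S" and "w \<in> carrier W"
  shows "len (s \<otimes> w) \<le> len w + 1"
proof -
  obtain xs where "reduced xs" "wprod xs = w"
    using ex_reduced assms(2) by blast
  then show ?thesis
    using length_wprod_le[of "s # xs"] assms(1) by (auto simp: reduced_def)
qed

lemma length_le_gen_mult: "s \<in> S \<Longrightarrow> w \<in> carrier W \<Longrightarrow> len w \<le> len (s \<otimes> w) + 1"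
  using length_gen_mult_le[of s "s \<otimes> w"] by simp

lemma reduced_Cons: "reduced (s # xs) \<Longrightarrow> reduced xs"
  using length_wprod_le[of xs] length_gen_mult_le[of s "wprod xs"] by (auto simp: reduced_def)

lemma length_gen: "s \<in> S \<Longrightarrow> len s = 1"
  using length_wprod_le[of "[s]"] length_eq_0_iff[of s] one_not_gen by force

lemma ex_left_descent:
  assumes "w \<in> carrier W" and "w \<noteq> \<one>"
  obtains s where "s \<in> S" and "len (s \<otimes> w) < len w"
proof -
  obtain xs where xs: "reduced xs" "wprod xs = w"
    using ex_reduced assms(1) by blast
  with assms(2) obtain s ys where "xs = s # ys"
    by (cases xs) auto
  with xs have "s \<in> S" "len (s \<otimes> w) < len w"
    using length_wprod_le[of ys] by (auto simp: reduced_def)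
  then show ?thesis ..
qed

subsection \<open>The reflection representation\<close>

text \<open>Following Bjorner and Brenti, \<open>s\<close> acts on pairs \<open>(x, e)\<close> by
  \<open>(s x s, e + [x = s])\<close>; they use reflections \<open>x\<close> only, but all of \<open>W\<close> does as well.\<close>

definition refl_perm :: "'a \<Rightarrow> 'a \<times> bool \<Rightarrow> 'a \<times> bool" where
  "refl_perm s = restrict (\<lambda>(x, e). (s \<otimes> x \<otimes> s, e \<noteq> (x = s))) (carrier W \<times> UNIV)"

abbreviation Perm :: "('a \<times> bool \<Rightarrow> 'a \<times> bool) monoid" where
  "Perm \<equiv> BijGroup (carrier W \<times> UNIV)"

lemma monoid_Perm: "monoid Perm"
  by (rule group.is_monoid[OF group_BijGroup])

lemma refl_perm_apply [simp]:
  "x \<in> carrier W \<Longrightarrow> refl_perm s (x, e) = (s \<otimes> x \<otimes> s, e \<noteq> (x = s))"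
  by (simp add: refl_perm_def)

lemma refl_perm_closed: "s \<in> S \<Longrightarrow> refl_perm s \<in> carrier Perm"
proof -
  assume s: "s \<in> S"
  have "refl_perm s (refl_perm s p) = p" if "p \<in> carrier W \<times> UNIV" for p
    using that s by auto
  moreover have "refl_perm s \<in> carrier W \<times> UNIV \<rightarrow> carrier W \<times> UNIV"
    using s by auto
  ultimately have "bij_betw (refl_perm s) (carrier W \<times> UNIV) (carrier W \<times> UNIV)"
    using s by (intro bij_betw_byWitness[where f' = "refl_perm s"]) auto
  then show ?thesis
    by (simp add: BijGroup_def Bij_def refl_perm_def)
qed

lemma Perm_mult_apply:
  "f \<in> carrier Perm \<Longrightarrow> g \<in> carrier Perm \<Longrightarrow> p \<in> carrier W \<times> UNIV \<Longrightarrow> (g \<otimes>\<^bsub>Perm\<^esub> f) p = g (f p)"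
  by (simp add: BijGroup_def compose_def)

definition word_perm :: "'a list \<Rightarrow> 'a \<times> bool \<Rightarrow> 'a \<times> bool" where
  "word_perm ws = word_prod Perm (map refl_perm (rev ws))"

text \<open>\<open>refl_count ws x\<close> is the number of positions \<open>i\<close> with
  \<open>x = s\<^sub>1 \<cdots> s\<^sub>i \<cdots> s\<^sub>1\<close>, where \<open>ws = [s\<^sub>1, s\<^sub>2, \<dots>]\<close>.\<close>

primrec refl_count :: "'a list \<Rightarrow> 'a \<Rightarrow> nat" where
  "refl_count [] x = 0"
| "refl_count (s # ws) x = (if x = s then 1 else 0) + refl_count ws (s \<otimes> x \<otimes> s)"

lemma word_perm_closed: "set ws \<subseteq> S \<Longrightarrow> word_perm ws \<in> carrier Perm"
  unfolding word_perm_def using refl_perm_closed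
  by (intro monoid.word_prod_closed[OF monoid_Perm]) auto

lemma word_perm_apply:
  "set ws \<subseteq> S \<Longrightarrow> x \<in> carrier W \<Longrightarrow>
    word_perm ws (x, e) = (wprod (rev ws) \<otimes> x \<otimes> wprod ws, e \<noteq> odd (refl_count ws x))"
proof (induction ws arbitrary: x e)
  case Nil
  then show ?case
    by (simp add: word_perm_def BijGroup_def)
next
  case (Cons s ws)
  then have s: "s \<in> S" and ws: "set ws \<subseteq> S"
    by auto
  have "word_perm (s # ws) = word_perm ws \<otimes>\<^bsub>Perm\<^esub> refl_perm s"
    using monoid.word_prod_append[OF monoid_Perm, of "map refl_perm (rev ws)" "[refl_perm s]"]
      monoid.r_one[OF monoid_Perm] refl_perm_closed ws s
    by (auto simp: word_perm_def)
  then have "word_perm (s # ws) (x, e) = word_perm ws (s \<otimes> x \<otimes> s, e \<noteq> (x = s))"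
    using Perm_mult_apply[OF refl_perm_closed[OF s] word_perm_closed[OF ws]] Cons.prems by simp
  also have "\<dots> = (wprod (rev (s # ws)) \<otimes> x \<otimes> wprod (s # ws), e \<noteq> odd (refl_count (s # ws) x))"
    using Cons.IH[OF ws] s ws Cons.prems by (auto simp: wprod_append m_assoc)
  finally show ?case .
qed

lemma alternating_conj_eq_iff:
  assumes a: "a \<in> S" and b: "b \<in> S" and x: "x \<in> carrier W"
  shows "b \<otimes> (a \<otimes> x \<otimes> a) \<otimes> b = (a \<otimes> b) [^] i \<otimes> a \<longleftrightarrow> x = (a \<otimes> b) [^] Suc (Suc i) \<otimes> a"
proof -
  have "(a \<otimes> b) \<otimes> (a \<otimes> b) [^] i = (a \<otimes> b) [^] i \<otimes> (a \<otimes> b)"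
    using a b by (simp flip: nat_pow_Suc2)
  then have comm: "(a \<otimes> b) [^] i \<otimes> (a \<otimes> (b \<otimes> y)) = a \<otimes> (b \<otimes> ((a \<otimes> b) [^] i \<otimes> y))"
    if "y \<in> carrier W" for y
  proof -
    have "((a \<otimes> b) \<otimes> (a \<otimes> b) [^] i) \<otimes> y = ((a \<otimes> b) [^] i \<otimes> (a \<otimes> b)) \<otimes> y"
      by (simp only: \<open>(a \<otimes> b) \<otimes> (a \<otimes> b) [^] i = (a \<otimes> b) [^] i \<otimes> (a \<otimes> b)\<close>)
    then show ?thesis
      using a b that by (simp add: m_assoc)
  qed
  have "a \<otimes> (b \<otimes> ((a \<otimes> b) [^] i \<otimes> a) \<otimes> b) \<otimes> a = (a \<otimes> b) [^] Suc (Suc i) \<otimes> a"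
    using a b by (simp add: m_assoc comm)
  then show ?thesis
    using a b x by (simp add: conj_gen_eq_iff)
qed

lemma refl_count_alternating:
  assumes a: "a \<in> S" and b: "b \<in> S"
  shows "x \<in> carrier W \<Longrightarrow>
    refl_count (concat (replicate n [a, b])) x = (\<Sum>i<2 * n. if x = (a \<otimes> b) [^] i \<otimes> a then 1 else 0)"
proof (induction n arbitrary: x)
  case (Suc n)
  define f where "f i = (if x = (a \<otimes> b) [^] i \<otimes> a then 1 else 0 :: nat)" for i :: nat
  have "refl_count (concat (replicate n [a, b])) (b \<otimes> (a \<otimes> x \<otimes> a) \<otimes> b) =
      (\<Sum>i<2 * n. if b \<otimes> (a \<otimes> x \<otimes> a) \<otimes> b = (a \<otimes> b) [^] i \<otimes> a then 1 else 0)"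
    using Suc.IH a b Suc.prems by simp
  also have "\<dots> = (\<Sum>i<2 * n. f (Suc (Suc i)))"
    by (simp only: alternating_conj_eq_iff[OF a b Suc.prems] f_def)
  finally have rest: "refl_count (concat (replicate n [a, b])) (b \<otimes> (a \<otimes> x \<otimes> a) \<otimes> b) =
      (\<Sum>i<2 * n. f (Suc (Suc i)))" .
  have "f 0 = (if x = a then 1 else 0)"
    using a by (simp add: f_def)
  moreover have "f (Suc 0) = (if a \<otimes> x \<otimes> a = b then 1 else 0)"
    using a b Suc.prems by (simp add: f_def conj_gen_eq_iff)
  ultimately have "refl_count (concat (replicate (Suc n) [a, b])) x =
      f 0 + (f (Suc 0) + (\<Sum>i<2 * n. f (Suc (Suc i))))"
    by (simp add: rest)
  also have "\<dots> = (\<Sum>i<2 * Suc n. f i)"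
    by (simp add: sum.lessThan_Suc_shift del: sum.lessThan_Suc)
  finally show ?case
    by (simp add: f_def)
qed simp

lemma refl_count_alternating_even:
  assumes a: "a \<in> S" and b: "b \<in> S" and ab: "(a \<otimes> b) [^] n = \<one>" and x: "x \<in> carrier W"
  shows "even (refl_count (concat (replicate n [a, b])) x)"
proof -
  define g where "g i = (if x = (a \<otimes> b) [^] i \<otimes> a then 1 else 0 :: nat)" for i :: nat
  have "g (i + n) = g i" for i
    using ab a b by (simp add: g_def nat_pow_mult[symmetric])
  then have "(\<Sum>i<2 * n. g i) = (\<Sum>i<n. g i) + (\<Sum>i<n. g i)"
    by (rule sum_lessThan_twice_period)
  then show ?thesis
    using refl_count_alternating[OF a b x, of n] by (simp add: g_def)
qed

lemma word_perm_eq_one: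
  assumes ws: "set ws \<subseteq> S" and "wprod ws = \<one>"
    and even: "\<And>x. x \<in> carrier W \<Longrightarrow> even (refl_count ws x)"
  shows "word_perm ws = \<one>\<^bsub>Perm\<^esub>"
proof (rule extensionalityI[of _ "carrier W \<times> UNIV"])
  show "word_perm ws \<in> extensional (carrier W \<times> UNIV)"
    using word_perm_closed[OF ws] by (simp add: BijGroup_def Bij_def)
  show "\<one>\<^bsub>Perm\<^esub> \<in> extensional (carrier W \<times> UNIV)"
    by (simp add: BijGroup_def)
  have "wprod (rev ws) = \<one>"
    using ws assms(2) by (simp add: wprod_rev)
  fix p :: "'a \<times> bool" assume "p \<in> carrier W \<times> UNIV"
  then obtain x e where "p = (x, e)" "x \<in> carrier W"
    by auto
  then show "word_perm ws p = \<one>\<^bsub>Perm\<^esub> p"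
    using word_perm_apply[OF ws] \<open>wprod (rev ws) = \<one>\<close> assms(2) even by (simp add: BijGroup_def)
qed

lemma refl_perm_relation:
  assumes s: "s \<in> S" and t: "t \<in> S" and st: "(s \<otimes> t) [^] (n::nat) = \<one>"
  shows "(refl_perm s \<otimes>\<^bsub>Perm\<^esub> refl_perm t) [^]\<^bsub>Perm\<^esub> n = \<one>\<^bsub>Perm\<^esub>"
proof -
  define ws where "ws = concat (replicate n [t, s])"
  have ws: "set ws \<subseteq> S"
    using s t by (cases n) (auto simp: ws_def)
  have "(refl_perm s \<otimes>\<^bsub>Perm\<^esub> refl_perm t) [^]\<^bsub>Perm\<^esub> n = word_perm ws"
    using monoid.word_prod_concat_replicate[OF monoid_Perm, of "[refl_perm s, refl_perm t]" n]
      monoid.r_one[OF monoid_Perm] monoid.m_closed[OF monoid_Perm] refl_perm_closed s t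
    by (simp add: word_perm_def ws_def rev_concat map_concat)
  moreover have ts: "(t \<otimes> s) [^] n = \<one>"
  proof -
    have "t \<otimes> s = inv (s \<otimes> t)"
      using s t by (simp add: inv_mult_group)
    then show ?thesis
      using s t st by (simp add: nat_pow_inv)
  qed
  then have "wprod ws = \<one>"
    using word_prod_concat_replicate[of "[t, s]" n] s t by (simp add: ws_def)
  ultimately show ?thesis
    using word_perm_eq_one[OF ws] refl_count_alternating_even[OF t s ts] by (simp add: ws_def)
qed

lemma ex_hom_Perm: "\<exists>\<phi>\<in>hom W Perm. \<forall>s\<in>S. \<phi> s = refl_perm s"
proof (rule universal_property[OF group_BijGroup])
  show "refl_perm \<in> S \<rightarrow> carrier Perm"
    using refl_perm_closed by blast
qed (simp add: refl_perm_relation)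

lemma word_perm_cong:
  assumes xs: "set xs \<subseteq> S" and ys: "set ys \<subseteq> S" and eq: "wprod xs = wprod ys"
  shows "word_perm xs = word_perm ys"
proof -
  obtain \<phi> where "\<phi> \<in> hom W Perm" and \<phi>_gen: "\<forall>s\<in>S. \<phi> s = refl_perm s"
    using ex_hom_Perm by blast
  then have \<phi>: "group_hom W Perm \<phi>"
    by (simp add: group_hom_def group_hom_axioms_def group_BijGroup)
  have \<phi>_wprod: "\<phi> (wprod (rev zs)) = word_perm zs" if "set zs \<subseteq> S" for zs
  proof -
    have "\<phi> (wprod (rev zs)) = word_prod Perm (map \<phi> (rev zs))"
      using group_hom.hom_word_prod[OF \<phi>, of "rev zs"] that gens_closed by auto
    also have "map \<phi> (rev zs) = map refl_perm (rev zs)"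
      using that \<phi>_gen by (intro map_cong) auto
    finally show ?thesis
      by (simp add: word_perm_def)
  qed
  have "wprod (rev xs) = wprod (rev ys)"
    using xs ys eq by (simp add: wprod_rev)
  then show ?thesis
    using \<phi>_wprod[OF xs] \<phi>_wprod[OF ys] by simp
qed

lemma refl_count_parity:
  assumes "set xs \<subseteq> S" and "set ys \<subseteq> S" and "wprod xs = wprod ys" and "x \<in> carrier W"
  shows "odd (refl_count xs x) \<longleftrightarrow> odd (refl_count ys x)"
proof -
  have "word_perm xs (x, False) = word_perm ys (x, False)"
    using word_perm_cong[OF assms(1-3)] by simp
  then show ?thesis
    using word_perm_apply[OF assms(1,4)] word_perm_apply[OF assms(2,4)] by simp
qed

subsection \<open>The exchange condition\<close>

lemma refl_count_pos_deletion:
  "set xs \<subseteq> S \<Longrightarrow> x \<in> carrier W \<Longrightarrow> 0 < refl_count xs x \<Longrightarrow>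
    \<exists>i<length xs. x \<otimes> wprod xs = wprod (take i xs @ drop (Suc i) xs)"
proof (induction xs arbitrary: x)
  case (Cons s xs)
  then have s: "s \<in> S" and xs: "set xs \<subseteq> S"
    by auto
  show ?case
  proof (cases "x = s")
    case True
    then show ?thesis
      using s xs by (intro exI[of _ 0]) simp
  next
    case False
    with Cons.prems obtain i where i: "i < length xs"
      and del: "s \<otimes> x \<otimes> s \<otimes> wprod xs = wprod (take i xs @ drop (Suc i) xs)"
      using Cons.IH[OF xs, of "s \<otimes> x \<otimes> s"] s by auto
    have "x \<otimes> wprod (s # xs) = s \<otimes> (s \<otimes> x \<otimes> s \<otimes> wprod xs)"
      using s xs Cons.prems by (simp add: m_assoc)
    also have "\<dots> = wprod (take (Suc i) (s # xs) @ drop (Suc (Suc i)) (s # xs))"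
      by (simp add: del)
    finally show ?thesis
      using i by (intro exI[of _ "Suc i"]) simp
  qed
qed simp

lemma exchange:
  assumes xs: "reduced xs" and s: "s \<in> S" and le: "len (s \<otimes> wprod xs) \<le> len (wprod xs)"
  shows "\<exists>i<length xs. s \<otimes> wprod xs = wprod (take i xs @ drop (Suc i) xs)"
proof (cases "0 < refl_count xs s")
  case True
  then show ?thesis
    using refl_count_pos_deletion[of xs s] xs s by (simp add: reduced_def)
next
  case False
  have xsS: "set xs \<subseteq> S"
    using xs by (simp add: reduced_def)
  have "s \<otimes> wprod xs \<in> carrier W"
    using s xsS by simp
  then obtain ys where ys: "reduced ys" "wprod ys = s \<otimes> wprod xs"
    using ex_reduced by blast
  then have ysS: "set ys \<subseteq> S"
    by (simp add: reduced_def)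
  have "wprod (s # ys) = wprod xs"
    using ys(2) s xsS by simp
  then have "even (refl_count (s # ys) s)"
    using refl_count_parity[of "s # ys" xs s] False s xsS ysS by simp
  then have "odd (refl_count ys s)"
    using s by (simp add: m_assoc)
  then have "0 < refl_count ys s"
    by (rule odd_pos)
  then obtain i where i: "i < length ys" and del: "s \<otimes> wprod ys = wprod (take i ys @ drop (Suc i) ys)"
    using refl_count_pos_deletion[OF ysS gen_closed[OF s]] by blast
  then have "len (wprod xs) < length ys"
    using length_wprod_deletion_less[OF ysS i] ys(2) s xsS by simp
  with ys le show ?thesis
    by (simp add: reduced_def)
qed

lemma reduced_deletion:
  assumes "reduced xs" and "s \<in> S" and "i < length xs"
    and "s \<otimes> wprod xs = wprod (take i xs @ drop (Suc i) xs)"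
  shows "reduced (take i xs @ drop (Suc i) xs)"
proof -
  have S: "set (take i xs @ drop (Suc i) xs) \<subseteq> S"
    using assms(1) set_take_drop_Suc_subset[of i xs] unfolding reduced_def by blast
  then have "len (wprod xs) \<le> len (wprod (take i xs @ drop (Suc i) xs)) + 1"
    using length_le_gen_mult[OF assms(2), of "wprod xs"] assms(1,4) by (simp add: reduced_def)
  then show ?thesis
    using length_wprod_le[OF S] assms(1,3) S by (simp add: reduced_def)
qed

lemma reduced_subword:
  "set xs \<subseteq> S \<Longrightarrow> \<exists>ys. set ys \<subseteq> set xs \<and> reduced ys \<and> wprod ys = wprod xs"
proof (induction xs)
  case Nil
  then show ?case
    by (simp add: reduced_def)
next
  case (Cons s xs)
  then obtain ys where ys: "set ys \<subseteq> set xs" "reduced ys" "wprod ys = wprod xs"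
    by auto
  have s: "s \<in> S" and ysS: "set ys \<subseteq> S"
    using Cons.prems ys(2) by (auto simp: reduced_def)
  show ?case
  proof (cases "len (s \<otimes> wprod ys) \<le> len (wprod ys)")
    case True
    then obtain i where "i < length ys" and del: "s \<otimes> wprod ys = wprod (take i ys @ drop (Suc i) ys)"
      using exchange[OF ys(2) s] by blast
    then have "reduced (take i ys @ drop (Suc i) ys)"
      using reduced_deletion[OF ys(2) s] by blast
    moreover have "set (take i ys @ drop (Suc i) ys) \<subseteq> set (s # xs)"
      using ys(1) set_take_drop_Suc_subset[of i ys] by auto
    ultimately show ?thesis
      using del ys(3) s by (intro exI[of _ "take i ys @ drop (Suc i) ys"]) auto
  next
    case False
    then have "reduced (s # ys)"
      using length_wprod_le[of "s # ys"] s ys(2) by (simp add: reduced_def)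
    then show ?thesis
      using ys by (intro exI[of _ "s # ys"]) auto
  qed
qed

lemma parabolic_reduced:
  assumes J: "J \<subseteq> S" and w: "w \<in> parabolic W J"
  obtains ys where "set ys \<subseteq> J" and "reduced ys" and "wprod ys = w"
proof -
  obtain xs where xs: "set xs \<subseteq> J" "wprod xs = w"
    using parabolic_eq[OF J] w by auto
  then obtain ys where "set ys \<subseteq> set xs" "reduced ys" "wprod ys = wprod xs"
    using reduced_subword[of xs] J by blast
  with xs show ?thesis
    using that by blast
qed

lemma gen_in_parabolic_iff:
  assumes J: "J \<subseteq> S" and s: "s \<in> S"
  shows "s \<in> parabolic W J \<longleftrightarrow> s \<in> J"
proof
  assume "s \<in> parabolic W J"
  then obtain ys where ys: "set ys \<subseteq> J" "reduced ys" "wprod ys = s"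
    using parabolic_reduced[OF J] by blast
  then have "length ys = 1"
    using length_gen[OF s] by (simp add: reduced_def)
  then obtain q where "ys = [q]"
    by (cases ys) auto
  with ys s J show "s \<in> J"
    by auto
qed (use J in \<open>simp add: parabolic_def generate.incl\<close>)

lemma left_descent_in_parabolic:
  assumes J: "J \<subseteq> S" and w: "w \<in> parabolic W J" and s: "s \<in> S"
    and descent: "len (s \<otimes> w) < len w"
  shows "s \<in> J"
proof -
  obtain ys where ys: "set ys \<subseteq> J" "reduced ys" "wprod ys = w"
    using parabolic_reduced[OF J w] by blast
  then have "len (s \<otimes> wprod ys) \<le> len (wprod ys)"
    using descent by simp
  then obtain i where "s \<otimes> wprod ys = wprod (take i ys @ drop (Suc i) ys)"
    using exchange[OF ys(2) s] by blast
  then have "s \<otimes> w = wprod (take i ys @ drop (Suc i) ys)"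
    using ys(3) by simp
  moreover have "set (take i ys @ drop (Suc i) ys) \<subseteq> J"
    using ys(1) set_take_drop_Suc_subset[of i ys] by blast
  ultimately have "s \<otimes> w \<in> parabolic W J"
    using wprod_in_parabolic[OF J] by simp
  then have "s \<otimes> w \<otimes> inv w \<in> parabolic W J"
    using w subgroup_parabolic[OF J] by (simp add: subgroup.m_closed subgroup.m_inv_closed)
  moreover have "s \<otimes> w \<otimes> inv w = s"
    using w s subgroup.mem_carrier[OF subgroup_parabolic[OF J]] by (simp add: m_assoc)
  ultimately show ?thesis
    using gen_in_parabolic_iff[OF J s] by simp
qed

subsection \<open>Minimal coset representatives\<close>

text \<open>If \<open>s\<close> exchanged a letter of \<open>xs\<close>, then \<open>s # xs\<close> would not be reduced; if it
  exchanged a letter of a reduced word of \<open>u\<close>, then \<open>u\<close> would not be shortest in its coset.\<close>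

lemma length_parabolic_mult_step:
  assumes J: "J \<subseteq> S" and u: "u \<in> carrier W"
    and u_min: "\<And>x. x \<in> parabolic W J \<Longrightarrow> len u \<le> len (x \<otimes> u)"
    and red: "reduced (s # xs)" and sxs: "set (s # xs) \<subseteq> J"
    and IH: "len (wprod xs \<otimes> u) = length xs + len u"
  shows "len (wprod xs \<otimes> u) < len (s \<otimes> (wprod xs \<otimes> u))"
proof (rule ccontr)
  assume not_less: "\<not> ?thesis"
  have s: "s \<in> S" and xsS: "set xs \<subseteq> S"
    using red by (auto simp: reduced_def)
  obtain us where us: "reduced us" "wprod us = u" and usS: "set us \<subseteq> S"
    using ex_reduced u by (auto simp: reduced_def)
  have "len (s \<otimes> wprod (xs @ us)) \<le> len (wprod (xs @ us))"
    using not_less us xsS usS by (simp add: wprod_append)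
  moreover have "reduced (xs @ us)"
    using IH us xsS by (simp add: reduced_def wprod_append)
  ultimately obtain i where i: "i < length (xs @ us)"
    and del: "s \<otimes> wprod (xs @ us) = wprod (take i (xs @ us) @ drop (Suc i) (xs @ us))"
    using exchange[of "xs @ us" s] s by blast
  show False
  proof (cases "i < length xs")
    case True
    have S': "set (take i xs @ drop (Suc i) xs) \<subseteq> S"
      using xsS set_take_drop_Suc_subset[of i xs] by blast
    have "s \<otimes> wprod xs \<otimes> u = wprod ((take i xs @ drop (Suc i) xs) @ us)"
      using del True xsS usS us(2) s u by (simp add: wprod_append m_assoc)
    also have "\<dots> = wprod (take i xs @ drop (Suc i) xs) \<otimes> u"
      using S' usS us(2) by (simp only: wprod_append)
    finally have "s \<otimes> wprod xs = wprod (take i xs @ drop (Suc i) xs)"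
      by (rule r_cancel[OF _ _ _ u]) (use S' s xsS in simp_all)
    then show False
      using length_wprod_deletion_less[OF xsS True] red by (simp add: reduced_def)
  next
    case False
    define k where "k = i - length xs"
    define us' where "us' = take k us @ drop (Suc k) us"
    have us'S: "set us' \<subseteq> S"
      using usS set_take_drop_Suc_subset[of k us] unfolding us'_def by blast
    have "s \<otimes> (wprod xs \<otimes> u) = wprod xs \<otimes> wprod us'"
      using del False xsS usS us'S us(2) by (simp add: k_def us'_def wprod_append Suc_diff_le)
    then have "wprod us' = (inv (wprod xs) \<otimes> s \<otimes> wprod xs) \<otimes> u"
      using xsS us'S s u by (simp add: m_assoc inv_solve_left)
    moreover have "inv (wprod xs) \<otimes> s \<otimes> wprod xs \<in> parabolic W J"
      using sxs J wprod_in_parabolic[OF J, of xs] gen_in_parabolic_iff[OF J s] subgroup_parabolic[OF J]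
      by (auto intro: subgroup.m_closed subgroup.m_inv_closed)
    ultimately have "len u \<le> len (wprod us')"
      using u_min by simp
    also have "\<dots> < length us"
      using length_wprod_deletion_less[OF usS, of k] i False by (simp add: us'_def k_def)
    finally show False
      using us by (simp add: reduced_def)
  qed
qed

lemma length_parabolic_mult:
  assumes J: "J \<subseteq> S" and u: "u \<in> carrier W"
    and u_min: "\<And>x. x \<in> parabolic W J \<Longrightarrow> len u \<le> len (x \<otimes> u)"
  shows "reduced xs \<Longrightarrow> set xs \<subseteq> J \<Longrightarrow> len (wprod xs \<otimes> u) = length xs + len u"
proof (induction xs)
  case Nil
  then show ?case
    using u by simp
next
  case (Cons s xs)
  then have IH: "len (wprod xs \<otimes> u) = length xs + len u"
    using reduced_Cons by auto
  have s: "s \<in> S" and xsS: "set xs \<subseteq> S"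
    using Cons.prems by (auto simp: reduced_def)
  have "len (s \<otimes> (wprod xs \<otimes> u)) \<le> len (wprod xs \<otimes> u) + 1"
    using length_gen_mult_le s xsS u by simp
  then show ?case
    using length_parabolic_mult_step[OF J u u_min Cons.prems IH] IH s xsS u by (simp add: m_assoc)
qed

lemma length_less_min_coset:
  assumes J: "J \<subseteq> S" and u: "u \<in> carrier W"
    and u_min: "\<And>y. y \<in> parabolic W J #> u \<Longrightarrow> len u \<le> len y"
    and y: "y \<in> parabolic W J #> u" and "y \<noteq> u"
  shows "len u < len y"
proof -
  have sub: "subgroup (parabolic W J) W"
    by (rule subgroup_parabolic[OF J])
  have yW: "y \<in> carrier W"
    using y u by (auto intro: subgroup.elemrcos_carrier[OF sub is_group])
  have "y \<otimes> inv u \<in> parabolic W J"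
    using subgroup.rcos_module_imp[OF sub is_group u y] .
  then obtain xs where xs: "set xs \<subseteq> J" "reduced xs" "wprod xs = y \<otimes> inv u"
    using parabolic_reduced[OF J] by blast
  have "len u \<le> len (x \<otimes> u)" if "x \<in> parabolic W J" for x
    using rcosI[OF that subgroup.subset[OF sub] u] u_min by simp
  then have "len y = length xs + len u"
    using length_parabolic_mult[OF J u _ xs(2,1)] xs(3) yW u by (simp add: m_assoc)
  moreover have "xs \<noteq> []"
    using xs(3) \<open>y \<noteq> u\<close> yW u by (auto simp: inv_solve_right)
  ultimately show ?thesis
    by simp
qed

lemma min_rep:
  assumes J: "J \<subseteq> S" and v: "v \<in> carrier W"
  shows min_rep_in_coset: "min_rep W S J v \<in> parabolic W J #> v"
    and min_rep_length_less:
      "\<And>y. y \<in> parabolic W J #> v \<Longrightarrow> y \<noteq> min_rep W S J v \<Longrightarrow> len (min_rep W S J v) < len y"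
proof -
  define C where "C = parabolic W J #> v"
  have sub: "subgroup (parabolic W J) W"
    by (rule subgroup_parabolic[OF J])
  obtain u where u: "u \<in> C" and u_least: "\<And>y. y \<in> C \<Longrightarrow> len u \<le> len y"
    using ex_has_least_nat[of "\<lambda>y. y \<in> C" v len] rcos_self[OF v sub] by (auto simp: C_def)
  have uW: "u \<in> carrier W"
    using u v by (auto simp: C_def intro: subgroup.elemrcos_carrier[OF sub is_group])
  have C_eq: "C = parabolic W J #> u"
    using repr_independence[OF _ v sub] u by (simp add: C_def)
  have less: "len u < len y" if "y \<in> C" "y \<noteq> u" for y
    using length_less_min_coset[OF J uW _ _ that(2)] u_least that(1) C_eq by simp
  have "min_rep W S J v = u"
    unfolding min_rep_def C_def[symmetric]
  proof (rule the_equality)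
    show "u \<in> C \<and> (\<forall>y\<in>C. y \<noteq> u \<longrightarrow> len u < len y)"
      using u less by blast
    fix u' assume u': "u' \<in> C \<and> (\<forall>y\<in>C. y \<noteq> u' \<longrightarrow> len u' < len y)"
    show "u' = u"
    proof (rule ccontr)
      assume "u' \<noteq> u"
      then have "len u < len u'" and "len u' < len u"
        using less u u' by auto
      then show False
        by simp
    qed
  qed
  then show "min_rep W S J v \<in> parabolic W J #> v"
    and "\<And>y. y \<in> parabolic W J #> v \<Longrightarrow> y \<noteq> min_rep W S J v \<Longrightarrow> len (min_rep W S J v) < len y"
    using u less by (simp_all add: C_def)
qed

lemma min_rep_closed:
  "J \<subseteq> S \<Longrightarrow> v \<in> carrier W \<Longrightarrow> min_rep W S J v \<in> carrier W"
  using min_rep_in_coset subgroup.elemrcos_carrier[OF subgroup_parabolic is_group] by blast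

lemma min_rep_no_left_descent:
  assumes J: "J \<subseteq> S" and v: "v \<in> carrier W" and s: "s \<in> J"
  shows "len (min_rep W S J v) < len (s \<otimes> min_rep W S J v)"
proof -
  let ?w = "min_rep W S J v"
  have sub: "subgroup (parabolic W J) W"
    by (rule subgroup_parabolic[OF J])
  have sS: "s \<in> S" and w: "?w \<in> carrier W"
    using s J min_rep_closed[OF J v] by auto
  have "parabolic W J #> v = parabolic W J #> ?w"
    using repr_independence[OF min_rep_in_coset[OF J v] v sub] .
  moreover have "s \<otimes> ?w \<in> parabolic W J #> ?w"
    using s sub w by (intro rcosI) (auto simp: parabolic_def generate.incl subgroup.subset)
  moreover have "s \<otimes> ?w \<noteq> ?w"
    using sS w one_not_gen by (metis l_one r_cancel gen_closed one_closed)
  ultimately show ?thesis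
    using min_rep_length_less[OF J v] by simp
qed

lemma min_rep_eq_one_imp_parabolic:
  assumes J: "J \<subseteq> S" and w: "w \<in> carrier W" and "min_rep W S J w = \<one>"
  shows "w \<in> parabolic W J"
proof -
  have sub: "subgroup (parabolic W J) W"
    by (rule subgroup_parabolic[OF J])
  have "\<one> \<otimes> inv w \<in> parabolic W J"
    using min_rep_in_coset[OF J w] assms(3) subgroup.rcos_module_imp[OF sub is_group w] by simp
  then have "inv w \<in> parabolic W J"
    using w by simp
  then have "inv (inv w) \<in> parabolic W J"
    by (rule subgroup.m_inv_closed[OF sub])
  then show ?thesis
    using w by simp
qed

end

theorem lemma3p6:
  fixes W :: "('a, 'b) monoid_scheme" and S K :: "'a set" and w :: 'a
  assumes "coxeter_system W S"
    and "finite (carrier W)"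
    and "K \<subseteq> S"
    and "w \<in> min_reps W S K"
    and "\<forall>s \<in> S - K. min_rep W S (S - {s}) w = \<one>\<^bsub>W\<^esub>"
  shows "w = \<one>\<^bsub>W\<^esub>"
proof (rule ccontr)
  interpret coxeter W S
    using assms(1) by (simp add: coxeter_def coxeter_axioms_def coxeter_system_def)
  obtain v where v: "v \<in> carrier W" and w_eq: "w = min_rep W S K v"
    using assms(4) by (auto simp: min_reps_def)
  have w: "w \<in> carrier W"
    using min_rep_closed[OF assms(3) v] w_eq by simp
  assume "w \<noteq> \<one>\<^bsub>W\<^esub>"
  then obtain s where s: "s \<in> S" and descent: "len (s \<otimes>\<^bsub>W\<^esub> w) < len w"
    using ex_left_descent[OF w] by blast
  show False
  proof (cases "s \<in> K")
    case True
    then show False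
      using min_rep_no_left_descent[OF assms(3) v True] descent w_eq by simp
  next
    case False
    then have "w \<in> parabolic W (S - {s})"
      using min_rep_eq_one_imp_parabolic[OF _ w] assms(5) s by blast
    then have "s \<in> S - {s}"
      using left_descent_in_parabolic[OF _ _ s descent] by blast
    then show False
      by simp
  qed
qed

end
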